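(* Let $0<\eta<\frac1{2L}$ and let $\{(X^k,X_0^k;Y^k,Z^k)\}_{k\ge0}$ be generated by ADAPD (defined in the context). Then for all $k\ge0$, $$\mathcal L_\eta(X^{k+1},X_0^k;Y^k,Z^k)-\mathcal L_\eta(X^k,X_0^k;Y^k,Z^k)\le\frac{2L\eta-1}{2\eta}\|X^{k+1}-X^k\|_F^2+\frac{\epsilon_{k+1}}{2L}.$$
   Context: Notation: $\langle A,B\rangle=\sum_{i,j}a_{ij}b_{ij}$, $\|\cdot\|_F$ Frobenius norm, $e\in\mathbb R^N$ all-ones vector. Mixing matrix $W\in\mathbb R^{N\times N}$ of an undirected graph $\mathcal G=(\{1,\dots,N\},\mathcal E)$ with (i) $w_{ij}>0$ if $(i,j)\in\mathcal E$, $w_{ij}=0$ otherwise; (ii) $W=W^\top$; (iii) $\mathrm{null}(I-W)=\mathrm{span}\{e\}$; (iv) $-1<\lambda_N(W)\le\dots\le\lambda_2(W)<\lambda_1(W)=1$. $\sqrt{I-W}$ is the PSD square root of $I-W$. $f_i:\mathbb R^p\to\mathbb R$ differentiable; $F(X)=\frac1N\sum_if_i(x_i)$ for $X$ with rows $x_i^\top$, gradient $\nabla F(X)$ with rows $\frac1N\nabla f_i(x_i)^\top$; $\|\nabla F(X)-\nabla F(X')\|_F\le L\|X-X'\|_F$ for all $X,X'$, $0<L<\infty$. Augmented Lagrangian: $\mathcal L_\eta(X,X_0;Y,Z)=F(X)+\langle Y,X-X_0\rangle+\frac1{2\eta}\|X-X_0\|_F^2+\langle Z,\sqrt{I-W}X_0\rangle+\frac1{2\eta}\|\sqrt{I-W}X_0\|_F^2$.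 ADAPD: fix $\eta>0$ and non-increasing nonnegative $(\epsilon_k)_{k\ge1}$; arbitrary $X^0,X_0^0,Y^0$, $Z^0\in\mathrm{range}(\sqrt{I-W})$. For $k\ge0$: $X^{k+1}$ is any matrix such that each row $r_i^{k+1}$ of $R^{k+1}=\nabla F(X^{k+1})+Y^k+\frac1\eta(X^{k+1}-X_0^k)$ satisfies $\|r_i^{k+1}\|_2^2\le\epsilon_{k+1}/N$; $X_0^{k+1}=\frac12(WX_0^k+X^{k+1}+\eta(Y^k-\sqrt{I-W}Z^k))$, $Y^{k+1}=Y^k+\frac1\eta(X^{k+1}-X_0^{k+1})$, $Z^{k+1}=Z^k+\frac1\eta\sqrt{I-W}X_0^{k+1}$. *)

theory Defs
  imports "HOL-Analysis.Analysis"
begin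

text \<open>Nodes are indexed by a finite type 'n (N = CARD('n)),
  coordinates by a finite type 'p. An N x p matrix is an element of
  real^'p^'n (row i is X $ i). On this type the HOL-Analysis inner product
  is the Frobenius inner product and norm is the Frobenius norm.\<close>

definition ones :: "real^'n" where "ones = (\<chi> i. 1)"

definition mixing_matrix :: "('n::finite \<Rightarrow> 'n \<Rightarrow> bool) \<Rightarrow> real^'n^'n \<Rightarrow> bool" where
  "mixing_matrix E W \<longleftrightarrow>
     (\<forall>i j. E i j \<longleftrightarrow> E j i) \<and>
     (\<forall>i j. i \<noteq> j \<longrightarrow> (E i j \<longrightarrow> W $ i $ j > 0) \<and> (\<not> E i j \<longrightarrow> W $ i $ j = 0)) \<and>
     transpose W = W \<and>
     {v. (mat 1 - W) *v v = 0} = span {ones} \<and>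
     (\<forall>c v. v \<noteq> 0 \<and> W *v v = c *\<^sub>R v \<longrightarrow> -1 < c \<and> c \<le> 1)"

definition psd_sqrt_of :: "real^'n^'n \<Rightarrow> real^'n^'n \<Rightarrow> bool" where
  "psd_sqrt_of S A \<longleftrightarrow> transpose S = S \<and> (\<forall>v. 0 \<le> v \<bullet> (S *v v)) \<and> S ** S = A"

definition bigF :: "('n::finite \<Rightarrow> real^'p \<Rightarrow> real) \<Rightarrow> real^'p^'n \<Rightarrow> real" where
  "bigF f X = (\<Sum>i\<in>UNIV. f i (X $ i)) / real CARD('n)"

definition gradF :: "('n::finite \<Rightarrow> real^'p \<Rightarrow> real^'p) \<Rightarrow> real^'p^'n \<Rightarrow> real^'p^'n" where
  "gradF gf X = (\<chi> i. (1 / real CARD('n)) *\<^sub>R gf i (X $ i))"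

text \<open>Augmented Lagrangian L_eta(X, X0; Y, Z), with S = sqrt(I - W).\<close>
definition aug_lag ::
  "('n::finite \<Rightarrow> real^'p \<Rightarrow> real) \<Rightarrow> real^'n^'n \<Rightarrow> real \<Rightarrow>
   real^'p^'n \<Rightarrow> real^'p^'n \<Rightarrow> real^'p^'n \<Rightarrow> real^'p^'n \<Rightarrow> real" where
  "aug_lag f S \<eta> X X0 Y Z =
     bigF f X + Y \<bullet> (X - X0) + (1 / (2 * \<eta>)) * (norm (X - X0))\<^sup>2
     + Z \<bullet> (S ** X0) + (1 / (2 * \<eta>)) * (norm (S ** X0))\<^sup>2"

text \<open>The iterates (X, X0, Y, Z) are generated by ADAPD with step eta, tolerances eps
  (eps k for k >= 1; eps 0 is unused), gradients gf of the f_i, mixing matrix W and S = sqrt(I-W).\<close>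
definition adapd ::
  "('n::finite \<Rightarrow> real^'p \<Rightarrow> real^'p) \<Rightarrow> real^'n^'n \<Rightarrow> real^'n^'n \<Rightarrow> real \<Rightarrow> (nat \<Rightarrow> real) \<Rightarrow>
   (nat \<Rightarrow> real^'p^'n) \<Rightarrow> (nat \<Rightarrow> real^'p^'n) \<Rightarrow> (nat \<Rightarrow> real^'p^'n) \<Rightarrow> (nat \<Rightarrow> real^'p^'n) \<Rightarrow> bool"
  where
  "adapd gf W S \<eta> eps X X0 Y Z \<longleftrightarrow>
     (\<exists>V. Z 0 = S ** V) \<and>
     (\<forall>k. \<forall>i. (norm ((gradF gf (X (Suc k)) + Y k + (1 / \<eta>) *\<^sub>R (X (Suc k) - X0 k)) $ i))\<^sup>2
               \<le> eps (Suc k) / real CARD('n)) \<and>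
     (\<forall>k. X0 (Suc k) = (1/2) *\<^sub>R (W ** X0 k + X (Suc k) + \<eta> *\<^sub>R (Y k - S ** Z k))) \<and>
     (\<forall>k. Y (Suc k) = Y k + (1 / \<eta>) *\<^sub>R (X (Suc k) - X0 (Suc k))) \<and>
     (\<forall>k. Z (Suc k) = Z k + (1 / \<eta>) *\<^sub>R (S ** X0 (Suc k)))"

end

theory Submission
  imports Defs
begin

text \<open>Only F and the coupling terms in X - X0 depend on X, so the change of the
  Lagrangian is exactly F(X') - F(X) + <Y + (X' - X0)/eta, D> - |D|^2/(2 eta) with D = X' - X.
  The descent lemma for the L-smooth F bounds F(X') - F(X) by <grad F(X'), D> + L/2 |D|^2,
  which turns the first two terms into <R, D> for the residual R of the inexact X-step;
  Young's inequality and |R|^2 <= eps finish the bound.\<close>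

lemma descent_lemma:
  fixes g :: "'a::real_inner \<Rightarrow> real" and G :: "'a \<Rightarrow> 'a"
  assumes deriv: "\<And>x. (g has_derivative (\<lambda>h. G x \<bullet> h)) (at x)"
    and Lipschitz: "\<And>x y. norm (G x - G y) \<le> L * norm (x - y)"
  shows "g a - g b \<le> G a \<bullet> (a - b) + L / 2 * (norm (a - b))\<^sup>2"
proof -
  define d where "d = a - b"
  define h where "h t = g (b + t *\<^sub>R d) - t * (G a \<bullet> d) + L * (1 - t)\<^sup>2 / 2 * (norm d)\<^sup>2" for t
  have "h 1 \<le> h 0"
  proof (rule DERIV_nonpos_imp_nonincreasing[where f = h])
    fix t :: real
    assume t: "0 \<le> t" "t \<le> 1"
    have line: "((\<lambda>t. g (b + t *\<^sub>R d)) has_real_derivative G (b + t *\<^sub>R d) \<bullet> d) (at t)"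
      unfolding has_field_derivative_def
      by (rule has_derivative_compose[OF _ deriv, THEN has_derivative_eq_rhs])
        (auto intro!: derivative_eq_intros simp: fun_eq_iff)
    have "(G (b + t *\<^sub>R d) - G a) \<bullet> d \<le> norm (G (b + t *\<^sub>R d) - G a) * norm d"
      by (rule norm_cauchy_schwarz)
    also have "\<dots> \<le> L * norm (b + t *\<^sub>R d - a) * norm d"
      by (rule mult_right_mono[OF Lipschitz]) simp
    also have "b + t *\<^sub>R d - a = (t - 1) *\<^sub>R d"
      unfolding d_def by (simp add: algebra_simps)
    also have "L * norm ((t - 1) *\<^sub>R d) * norm d = L * (1 - t) * (norm d)\<^sup>2"
      using t by (simp add: power2_eq_square)
    finally have "G (b + t *\<^sub>R d) \<bullet> d - G a \<bullet> d - L * (1 - t) * (norm d)\<^sup>2 \<le> 0"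
      by (simp add: inner_diff_left)
    moreover have "(h has_real_derivative
        G (b + t *\<^sub>R d) \<bullet> d - G a \<bullet> d - L * (1 - t) * (norm d)\<^sup>2) (at t)"
      unfolding h_def
      by (rule derivative_eq_intros line refl | simp)+ (simp add: algebra_simps power2_eq_square)
    ultimately show "\<exists>y. (h has_real_derivative y) (at t) \<and> y \<le> 0"
      by blast
  qed simp
  then show ?thesis
    unfolding h_def d_def by simp
qed

lemma bigF_has_derivative:
  fixes f :: "'n::finite \<Rightarrow> real^'p \<Rightarrow> real" and gf :: "'n \<Rightarrow> real^'p \<Rightarrow> real^'p"
  assumes "\<And>i x. (f i has_derivative (\<lambda>h. gf i x \<bullet> h)) (at x)"
  shows "(bigF f has_derivative (\<lambda>H. gradF gf X \<bullet> H)) (at X)"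
proof -
  have "((\<lambda>X. f i (X $ i)) has_derivative (\<lambda>H. gf i (X $ i) \<bullet> H $ i)) (at X)" for i
  proof -
    have "((\<lambda>X. X $ i) has_derivative (\<lambda>H. H $ i)) (at X)"
      by (rule bounded_linear.has_derivative[OF bounded_linear_vec_nth has_derivative_ident])
    from has_derivative_compose[OF this assms] show ?thesis .
  qed
  then have "(bigF f has_derivative
      (\<lambda>H. (\<Sum>i\<in>UNIV. gf i (X $ i) \<bullet> H $ i) / real CARD('n))) (at X)"
    unfolding bigF_def
    by (intro bounded_linear.has_derivative[OF bounded_linear_divide] has_derivative_sum)
  then show ?thesis
    by (simp add: gradF_def inner_vec_def sum_divide_distrib)
qed

lemma inner_le_Young:
  fixes x y :: "'a::real_inner"
  assumes "0 < c"
  shows "x \<bullet> y \<le> (norm x)\<^sup>2 / (2 * c) + c / 2 * (norm y)\<^sup>2"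
proof -
  have "0 \<le> (norm (x - c *\<^sub>R y))\<^sup>2"
    by simp
  also have "\<dots> = (norm x)\<^sup>2 - 2 * c * (x \<bullet> y) + c\<^sup>2 * (norm y)\<^sup>2"
    by (simp add: power2_norm_eq_inner inner_diff_left inner_diff_right inner_commute
        algebra_simps flip: power2_eq_square)
  finally show ?thesis
    using assms by (simp add: field_simps power2_eq_square)
qed

lemma norm_sq_le_of_rows:
  fixes R :: "'a::real_inner^'n::finite"
  assumes "\<And>i. (norm (R $ i))\<^sup>2 \<le> e / real CARD('n)"
  shows "(norm R)\<^sup>2 \<le> e"
proof -
  have "(norm R)\<^sup>2 = (\<Sum>i\<in>UNIV. (norm (R $ i))\<^sup>2)"
    by (simp add: power2_norm_eq_inner inner_vec_def)
  also have "\<dots> \<le> (\<Sum>i\<in>(UNIV::'n set). e / real CARD('n))"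
    by (rule sum_mono) (rule assms)
  finally show ?thesis
    by simp
qed

lemma aug_lag_diff_primal:
  "aug_lag f S \<eta> A P V Z - aug_lag f S \<eta> B P V Z
     = bigF f A - bigF f B + (V + (1 / \<eta>) *\<^sub>R (A - P)) \<bullet> (A - B)
       - (norm (A - B))\<^sup>2 / (2 * \<eta>)"
proof -
  have "(norm (A - P))\<^sup>2 - (norm (B - P))\<^sup>2 = 2 * ((A - P) \<bullet> (A - B)) - (norm (A - B))\<^sup>2"
    by (simp add: power2_norm_eq_inner algebra_simps inner_diff_left inner_diff_right inner_commute)
  then have "(norm (A - P))\<^sup>2 / (2 * \<eta>) - (norm (B - P))\<^sup>2 / (2 * \<eta>)
      = (A - P) \<bullet> (A - B) / \<eta> - (norm (A - B))\<^sup>2 / (2 * \<eta>)"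
    by (simp add: diff_divide_distrib[symmetric]) (simp add: diff_divide_distrib)
  moreover have "V \<bullet> (A - P) - V \<bullet> (B - P) = V \<bullet> (A - B)"
    by (simp add: inner_diff_right)
  ultimately show ?thesis
    unfolding aug_lag_def by (simp only: inner_add_left inner_scaleR_left) argo
qed

theorem lemma7:
  fixes f :: "'n::finite \<Rightarrow> real^'p \<Rightarrow> real"
    and gf :: "'n \<Rightarrow> real^'p \<Rightarrow> real^'p"
    and E :: "'n \<Rightarrow> 'n \<Rightarrow> bool"
    and W S :: "real^'n^'n"
    and L \<eta> :: real
    and eps :: "nat \<Rightarrow> real"
    and X X0 Y Z :: "nat \<Rightarrow> real^'p^'n"
  assumes grad: "\<And>i x. (f i has_derivative (\<lambda>h. gf i x \<bullet> h)) (at x)"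
    and Lpos: "0 < L"
    and Lsmooth: "\<And>A B. norm (gradF gf A - gradF gf B) \<le> L * norm (A - B)"
    and mix: "mixing_matrix E W"
    and sqrtS: "psd_sqrt_of S (mat 1 - W)"
    and eta_pos: "0 < \<eta>" and eta_lt: "\<eta> < 1 / (2 * L)"
    and eps_nonneg: "\<And>k. 1 \<le> k \<Longrightarrow> 0 \<le> eps k"
    and eps_mono: "\<And>k. 1 \<le> k \<Longrightarrow> eps (Suc k) \<le> eps k"
    and alg: "adapd gf W S \<eta> eps X X0 Y Z"
  shows "aug_lag f S \<eta> (X (Suc k)) (X0 k) (Y k) (Z k) - aug_lag f S \<eta> (X k) (X0 k) (Y k) (Z k)
         \<le> (2 * L * \<eta> - 1) / (2 * \<eta>) * (norm (X (Suc k) - X k))\<^sup>2 + eps (Suc k) / (2 * L)"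
proof -
  define D where "D = X (Suc k) - X k"
  define R where "R = gradF gf (X (Suc k)) + Y k + (1 / \<eta>) *\<^sub>R (X (Suc k) - X0 k)"
  have "(norm R)\<^sup>2 \<le> eps (Suc k)"
    using alg unfolding adapd_def R_def by (blast intro: norm_sq_le_of_rows)
  then have "(norm R)\<^sup>2 / (2 * L) \<le> eps (Suc k) / (2 * L)"
    using Lpos by (simp add: divide_right_mono)
  then have "R \<bullet> D \<le> eps (Suc k) / (2 * L) + L / 2 * (norm D)\<^sup>2"
    using inner_le_Young[OF Lpos, of R D] by linarith
  moreover have "bigF f (X (Suc k)) - bigF f (X k) \<le> gradF gf (X (Suc k)) \<bullet> D + L / 2 * (norm D)\<^sup>2"
    unfolding D_def by (rule descent_lemma[OF bigF_has_derivative[OF grad] Lsmooth])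
  moreover have "(2 * L * \<eta> - 1) / (2 * \<eta>) * (norm D)\<^sup>2 = L * (norm D)\<^sup>2 - (norm D)\<^sup>2 / (2 * \<eta>)"
    using eta_pos by (simp add: field_simps)
  ultimately show ?thesis
    unfolding aug_lag_diff_primal D_def[symmetric] R_def by (simp add: inner_add_left)
qed

end
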